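(* Define primes $p_i$, $i\geq 1$, recursively: $p_1=5$, and for $i>1$, $p_i$ is the smallest prime larger than $p_{i-1}$ that does not divide $|{}^2G_2(3^{p_j})|$ for any $1\leq j<i$. Set $q_i=3^{p_i}$, $R_i={}^2G_2(q_i)$, and for a positive integer $k$ let $P_k=R_1\times\cdots\times R_k$. Then for every $i\geq 1$: (a) $\pi(R_i)\cap\pi(R_j)=\{2,3,7\}$ for all $j\neq i$; (b) $p_i\notin\pi(R_j)$ for all $j$; in particular $5\notin\pi(R_j)$ for all $j$; (c) $\pi(q_i+1)\neq\{2\}$ and $\pi(q_i-1)\neq\{2\}$; $7$ divides one of $q_i-\sqrt{3q_i}+1$, $q_i+\sqrt{3q_i}+1$; and $\pi(q_i+\sqrt{3q_i}+1)\neq\{7\}$ and $\pi(q_i-\sqrt{3q_i}+1)\neq\{7\}$; (d) for every positive integer $k$ and every integer $m>3$ (with $3^m$ such that ${}^2G_2(3^m)$ is defined, i.e. $m$ odd), if $\pi({}^2G_2(3^m))\subseteq\pi(P_k)$, then $m\in\{p_1,\dots,p_k\}$.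
   Context: For a finite group $X$ (or positive integer $n$), $\pi(X)$ (resp. $\pi(n)$) denotes the set of prime divisors of $|X|$ (resp. $n$). ${}^2G_2(q)$, $q=3^\alpha$ with $\alpha$ odd, is the small Ree group, of order $q^3(q-1)(q^3+1)$. *)

theory Defs
  imports "HOL-Computational_Algebra.Primes"
begin

definition ree_order :: "nat \<Rightarrow> nat" where
  "ree_order q = q^3 * (q - 1) * (q^3 + 1)"

abbreviation prime_set :: "nat \<Rightarrow> nat set" where
  "prime_set n \<equiv> prime_factors n"

text \<open>plist n = [p_1, ..., p_(n+1)].\<close>
primrec plist :: "nat \<Rightarrow> nat list" where
  "plist 0 = [5]"
| "plist (Suc n) = plist n @
     [LEAST x. prime x \<and> x > last (plist n) \<and>
        (\<forall>y\<in>set (plist n). \<not> x dvd ree_order (3 ^ y))]"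

text \<open>p i for i >= 1 (p 0 is meaningless).\<close>
definition pp :: "nat \<Rightarrow> nat" where
  "pp i = plist (i - 1) ! (i - 1)"

definition qq :: "nat \<Rightarrow> nat" where
  "qq i = 3 ^ pp i"

text \<open>sqrt(3 q_i) = 3^((p_i+1)/2), p_i odd.\<close>
definition sq3q :: "nat \<Rightarrow> nat" where
  "sq3q i = 3 ^ ((pp i + 1) div 2)"

end

theory Submission
  imports Defs "HOL-Number_Theory.Number_Theory"
begin

(*
  A prime r <> 3 dividing the order of 2G2(3^n) divides 3^(6n) - 1, so it is controlled by
  the multiplicative order of 3 modulo r. For two coprime exponents this forces r to divide
  3^6 - 1 = 2^3 * 7 * 13, and 13 is excluded as soon as 3 does not divide the exponent;
  this gives (a), and together with Fermat's little theorem also (b).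

  For (c), q = 3^p is 3 modulo 8, so (q + 1)/4 and (q - 1)/2 are odd and greater than 1.
  With s = sqrt(3q) one has (q - s + 1)(q + s + 1)(q + 1) = q^3 + 1, which 7 divides while
  q + 1 is prime to 7. Finally q +- s + 1 is 1 modulo s = 3^(h+1), and 7^k = 1 modulo 3^(h+1)
  forces 3^h to divide k, so a power of 7 of that shape exceeds 3q.

  For (d), if 3 divides m then 19 divides the order of 2G2(3^m) but no order with a prime
  exponent p >= 5. Otherwise m is prime to 6 and 3^m - 1 has a prime divisor dividing no
  3^(6p) - 1 with p <> m prime: any odd prime divisor if m is prime and, if p p' divides m,
  a prime divisor of 3^(p p') - 1 dividing neither 3^p - 1 nor 3^p' - 1. The latter exists
  since otherwise (3^(p p') - 1)/(3^p - 1) would divide p p' (3^p' - 1), which is too small.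
*)

section \<open>Numbers of the form b ^ n - 1 and b ^ n + 1\<close>

lemma dvd_power_minus_one_iff_ord_dvd:
  fixes x n a :: nat
  assumes "0 < x"
  shows "n dvd x ^ a - 1 \<longleftrightarrow> ord n x dvd a"
proof -
  have "n dvd x ^ a - 1 \<longleftrightarrow> [x ^ a = 1] (mod n)"
    using assms by (simp add: cong_altdef_nat Suc_leI)
  also have "\<dots> \<longleftrightarrow> ord n x dvd a"
    by (rule ord_divides)
  finally show ?thesis .
qed

lemma power_minus_one_dvd:
  fixes x a b :: nat
  assumes "a dvd b"
  shows "x ^ a - 1 dvd x ^ b - 1"
proof (cases "x = 0")
  case False
  then have "ord (x ^ a - 1) x dvd a"
    using dvd_power_minus_one_iff_ord_dvd dvd_refl by blast
  with assms False show ?thesis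
    using dvd_power_minus_one_iff_ord_dvd dvd_trans by blast
qed (simp add: power_0_left)

lemma dvd_power_minus_one_gcd:
  fixes x n a b :: nat
  assumes "0 < x" "n dvd x ^ a - 1" "n dvd x ^ b - 1"
  shows "n dvd x ^ gcd a b - 1"
  using assms dvd_power_minus_one_iff_ord_dvd gcd_greatest by metis

lemma dvd_power_plus_one:
  fixes x n :: nat
  assumes "odd n"
  shows "x + 1 dvd x ^ n + 1"
proof -
  have "int x - (-1) dvd int x ^ n - (-1) ^ n"
    by (simp add: power_diff_sumr2)
  with assms have "int (x + 1) dvd int (x ^ n + 1)"
    by (simp add: add.commute)
  then show ?thesis
    by (simp only: of_nat_dvd_iff)
qed

lemma not_dvd_power_minus_one:
  fixes b k :: nat
  assumes "1 < b" "0 < k"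
  shows "\<not> b dvd b ^ k - 1"
proof
  assume "b dvd b ^ k - 1"
  moreover have "b dvd b ^ k"
    using assms(2) by simp
  ultimately have "b dvd b ^ k - (b ^ k - 1)"
    by (rule dvd_diff_nat[rotated])
  then show False
    using assms one_less_power[of b k] by simp
qed

section \<open>Geometric sums and new prime divisors of b ^ (p * q) - 1\<close>

lemma power_diff_1_eq_nat:
  fixes x n :: nat
  shows "x ^ n - 1 = (x - 1) * (\<Sum>i<n. x ^ i)"
proof (cases "x = 0")
  case False
  then have "int (x ^ n - 1) = (int x - 1) * (\<Sum>i<n. int x ^ i)"
    by (simp add: Suc_leI power_diff_1_eq)
  also have "\<dots> = int ((x - 1) * (\<Sum>i<n. x ^ i))"
    using False by simp
  finally show ?thesis
    by (simp only: of_nat_eq_iff)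
qed (simp add: power_0_left)

lemma one_plus_power_cong:
  fixes a n :: nat
  shows "[(1 + a) ^ n = 1 + n * a] (mod a ^ 2)"
proof (induction n)
  case (Suc n)
  have "(1 + a) ^ Suc n = (1 + a) ^ n * (1 + a)"
    by (rule power_Suc2)
  also have "[\<dots> = (1 + n * a) * (1 + a)] (mod a ^ 2)"
    using Suc.IH by (rule cong_mult) (rule cong_refl)
  also have "(1 + n * a) * (1 + a) = 1 + Suc n * a + n * a ^ 2"
    by (simp add: algebra_simps power2_eq_square)
  also have "[\<dots> = 1 + Suc n * a] (mod a ^ 2)"
    by (simp add: cong_def)
  finally show ?case .
qed simp

lemma geometric_sum_cong:
  fixes x r n :: nat
  assumes "[x = 1] (mod r)"
  shows "[(\<Sum>i<n. x ^ i) = n] (mod r)"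
proof -
  have "[(\<Sum>i<n. x ^ i) = (\<Sum>i<n. 1 ^ i)] (mod r)"
    using assms by (intro cong_sum cong_pow)
  then show ?thesis
    by simp
qed

lemma prime_square_not_dvd_geometric_sum:
  fixes x r :: nat
  assumes "prime r" "odd r" "[x = 1] (mod r)"
  shows "\<not> r ^ 2 dvd (\<Sum>i<r. x ^ i)"
proof
  assume dvd: "r ^ 2 dvd (\<Sum>i<r. x ^ i)"
  obtain s where s: "r = 2 * s + 1"
    using assms(2) by (auto elim: oddE)
  have "x \<ge> 1"
    using assms by (cases "x = 0") (auto simp: cong_def)
  then obtain u where x: "x = 1 + r * u"
    using assms(3) by (metis cong_altdef_nat dvdE le_add_diff_inverse)
  have "[(\<Sum>i<r. x ^ i) = (\<Sum>i<r. 1 + i * (r * u))] (mod r ^ 2)"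
  proof (rule cong_sum)
    fix i
    show "[x ^ i = 1 + i * (r * u)] (mod r ^ 2)"
      using one_plus_power_cong[of "r * u" i] unfolding x
      by (rule cong_dvd_modulus_nat) (simp add: power_mult_distrib)
  qed
  also have "(\<Sum>i<r. 1 + i * (r * u)) = r + r * u * \<Sum>{..<r}"
    by (simp only: sum.distrib sum_distrib_left) (simp add: ac_simps)
  also have "\<Sum>{..<r} = r * s"
    using gauss_sum_nat[of "2 * s"] s by (simp add: lessThan_Suc_atMost atLeast0AtMost)
  then have "r * u * \<Sum>{..<r} = r ^ 2 * (u * s)"
    by (simp add: power2_eq_square)
  also have "[r + r ^ 2 * (u * s) = r] (mod r ^ 2)"
    by (simp add: cong_def)
  finally have "r ^ 2 dvd r"
    using dvd by (simp add: cong_dvd_iff)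
  then show False
    using assms(1) prime_gt_1_nat[of r] by (simp add: power2_eq_square)
qed

lemma multiplicity_geometric_sum_le:
  fixes x r n :: nat
  assumes "prime n" "odd n" "prime r" "[x = 1] (mod r)"
  shows "multiplicity r (\<Sum>i<n. x ^ i) \<le> multiplicity r n"
proof (cases "r dvd (\<Sum>i<n. x ^ i)")
  case True
  then have "r dvd n"
    using cong_dvd_iff[OF geometric_sum_cong[OF assms(4)]] by blast
  then have "r = n"
    using assms primes_dvd_imp_eq by blast
  have "\<not> r ^ 2 dvd (\<Sum>i<n. x ^ i)"
    using prime_square_not_dvd_geometric_sum assms \<open>r = n\<close> by blast
  then have "multiplicity r (\<Sum>i<n. x ^ i) < 2"
    using multiplicity_dvd' not_less by blast
  then show ?thesis
    using \<open>r = n\<close> assms(3) by simp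
qed (simp add: not_dvd_imp_multiplicity_0)

lemma geometric_sum_dvd_if_no_new_prime:
  fixes b p q :: nat
  defines "A \<equiv> \<Sum>i<q. (b ^ p) ^ i"
  assumes "b \<ge> 2" "prime p" "odd p" "prime q" "odd q"
    and no_new: "\<And>r. prime r \<Longrightarrow> r dvd b ^ (p * q) - 1 \<Longrightarrow> r dvd b ^ p - 1 \<or> r dvd b ^ q - 1"
  shows "A dvd p * q * (b ^ q - 1)"
proof (rule multiplicity_le_imp_dvd)
  define B where "B = (\<Sum>i<p. (b ^ q) ^ i)"
  have "1 < b ^ p" "1 < b ^ q"
    using assms(2,3,5) one_less_power[of b] prime_gt_0_nat by (simp_all add: Suc_le_eq)
  then have pos: "b ^ p - 1 \<noteq> 0" "b ^ q - 1 \<noteq> 0" "p * q \<noteq> 0"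
    using assms(3,5) by (auto simp: prime_gt_0_nat)
  have A: "A \<noteq> 0" and B: "B \<noteq> 0"
    using assms(3,5) by (auto simp: A_def B_def prime_gt_0_nat)
  then show "A \<noteq> 0"
    by simp
  have DA: "b ^ (p * q) - 1 = (b ^ p - 1) * A"
    unfolding A_def using power_diff_1_eq_nat[of "b ^ p" q] by (simp add: power_mult)
  have DB: "b ^ (p * q) - 1 = (b ^ q - 1) * B"
    unfolding B_def using power_diff_1_eq_nat[of "b ^ q" p] by (simp add: mult.commute[of p q] power_mult)
  fix r :: nat
  assume r: "prime r"
  have mult_pqy: "multiplicity r (p * q * (b ^ q - 1)) = multiplicity r (p * q) + multiplicity r (b ^ q - 1)"
    using pos r by (simp add: prime_elem_multiplicity_mult_distrib)
  show "multiplicity r A \<le> multiplicity r (p * q * (b ^ q - 1))"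
  proof (cases "r dvd b ^ p - 1")
    case True
    then have "[b ^ p = 1] (mod r)"
      using assms(2) by (simp add: cong_altdef_nat Suc_leI)
    then have "multiplicity r A \<le> multiplicity r q"
      unfolding A_def using multiplicity_geometric_sum_le assms(5,6) r by blast
    also have "\<dots> \<le> multiplicity r (p * q)"
      using pos by (intro dvd_imp_multiplicity_le) auto
    finally show ?thesis
      using mult_pqy by simp
  next
    case False
    then have mA: "multiplicity r A = multiplicity r (b ^ (p * q) - 1)"
      using DA pos A r
      by (simp add: prime_elem_multiplicity_mult_distrib not_dvd_imp_multiplicity_0)
    show ?thesis
    proof (cases "r dvd b ^ (p * q) - 1")
      case True
      then have "r dvd b ^ q - 1"
        using no_new r False by blast
      then have "[b ^ q = 1] (mod r)"
        using assms(2) by (simp add: cong_altdef_nat Suc_leI)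
      then have "multiplicity r B \<le> multiplicity r p"
        unfolding B_def using multiplicity_geometric_sum_le assms(3,4) r by blast
      also have "\<dots> \<le> multiplicity r (p * q)"
        using pos by (intro dvd_imp_multiplicity_le) auto
      finally show ?thesis
        using mA DB mult_pqy pos B r by (simp add: prime_elem_multiplicity_mult_distrib)
    qed (simp add: mA not_dvd_imp_multiplicity_0)
  qed
qed

lemma exists_new_prime_dvd_power_minus_one:
  fixes b p q :: nat
  assumes "b \<ge> 2" "prime p" "p \<ge> 5" "prime q" "q \<ge> 5"
  shows "\<exists>r. prime r \<and> r dvd b ^ (p * q) - 1 \<and> \<not> r dvd b ^ p - 1 \<and> \<not> r dvd b ^ q - 1"
proof (rule ccontr)
  assume "\<not> ?thesis"
  then have no_new: "r dvd b ^ p - 1 \<or> r dvd b ^ q - 1"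
    if "prime r" "r dvd b ^ (p * q) - 1" for r
    using that by blast
  have "odd p" "odd q"
    using assms prime_odd_nat by auto
  then have "(\<Sum>i<q. (b ^ p) ^ i) dvd p * q * (b ^ q - 1)"
    using assms no_new by (intro geometric_sum_dvd_if_no_new_prime)
  moreover have "0 < p * q * (b ^ q - 1)"
    using assms one_less_power[of b q] by simp
  ultimately have "(\<Sum>i<q. (b ^ p) ^ i) \<le> p * q * (b ^ q - 1)"
    by (rule dvd_imp_le)
  also have "\<dots> < p * q * b ^ q"
    using assms by (simp add: prime_gt_0_nat)
  also have "\<dots> \<le> b ^ p * b ^ q * b ^ q"
  proof -
    have "n \<le> b ^ n" for n
      using less_exp[of n] power_mono[of 2 b n] assms(1) by linarith
    then show ?thesis
      by (intro mult_mono) auto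
  qed
  also have "\<dots> = b ^ (p + 2 * q)"
    by (simp add: power_add mult_2)
  also have "\<dots> \<le> b ^ (p * (q - 1))"
  proof (rule power_increasing)
    have "5 * q \<le> p * q"
      using assms(3) by (rule mult_le_mono1)
    moreover have "p * 5 \<le> p * q"
      using assms(5) by (rule mult_le_mono2)
    ultimately show "p + 2 * q \<le> p * (q - 1)"
      using diff_mult_distrib2[of p q 1] by linarith
  qed (use assms in simp)
  also have "\<dots> = (b ^ p) ^ (q - 1)"
    by (simp add: power_mult)
  also have "\<dots> \<le> (\<Sum>i<q. (b ^ p) ^ i)"
    using assms by (intro member_le_sum) auto
  finally show False
    by simp
qed

section \<open>Powers of 7 modulo powers of 3\<close>

lemma one_plus_three_power_three_pow:
  fixes u h :: nat
  assumes "\<not> 3 dvd u"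
  shows "\<exists>v. (1 + 3 * u) ^ 3 ^ h = 1 + 3 ^ (h + 1) * v \<and> \<not> 3 dvd v"
proof (induction h)
  case 0
  show ?case
    using assms by auto
next
  case (Suc h)
  then obtain v where v: "(1 + 3 * u) ^ 3 ^ h = 1 + 3 ^ (h + 1) * v" "\<not> 3 dvd v"
    by blast
  define t where "t = (3::nat) ^ h"
  have "(1 + 3 * u) ^ 3 ^ Suc h = (1 + 3 ^ (h + 1) * v) ^ 3"
    by (simp only: power_Suc2 power_mult v(1))
  also have "\<dots> = (1 + 3 * t * v) ^ 3"
    by (simp add: t_def)
  also have "\<dots> = 1 + 3 ^ (Suc h + 1) * (v + 3 * (t * v ^ 2 + t ^ 2 * v ^ 3))"
    by (simp add: t_def algebra_simps power2_eq_square power3_eq_cube)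
  finally have "(1 + 3 * u) ^ 3 ^ Suc h = 1 + 3 ^ (Suc h + 1) * (v + 3 * (t * v ^ 2 + t ^ 2 * v ^ 3))" .
  moreover have "\<not> 3 dvd v + 3 * (t * v ^ 2 + t ^ 2 * v ^ 3)"
    using v(2) by (simp add: dvd_add_left_iff)
  ultimately show ?case
    by blast
qed

lemma three_pow_dvd_exponent:
  fixes u k h :: nat
  assumes "\<not> 3 dvd u" "[(1 + 3 * u) ^ k = 1] (mod 3 ^ (h + 1))"
  shows "3 ^ h dvd k"
  using assms(2)
proof (induction h arbitrary: k)
  case (Suc h)
  have "[(1 + 3 * u) ^ k = 1] (mod 3 ^ (h + 1))"
    using Suc.prems by (rule cong_dvd_modulus_nat) (simp add: le_imp_power_dvd)
  then obtain k' where k: "k = 3 ^ h * k'"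
    using Suc.IH by blast
  obtain v where v: "(1 + 3 * u) ^ 3 ^ h = 1 + 3 ^ (h + 1) * v" "\<not> 3 dvd v"
    using one_plus_three_power_three_pow[OF assms(1)] by blast
  have "[(1 + 3 ^ (h + 1) * v) ^ k' = 1 + k' * (3 ^ (h + 1) * v)] (mod 3 ^ (h + 2))"
    using one_plus_power_cong[of "3 ^ (h + 1) * v" k']
    by (rule cong_dvd_modulus_nat) (simp add: power2_eq_square power_add)
  moreover have "(1 + 3 * u) ^ k = (1 + 3 ^ (h + 1) * v) ^ k'"
    by (simp only: k power_mult v(1))
  ultimately have "[1 + k' * (3 ^ (h + 1) * v) = 1] (mod 3 ^ (h + 2))"
    using Suc.prems by (metis Suc_eq_plus1 add_Suc_right cong_sym cong_trans one_add_one)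
  then have "3 * 3 ^ (h + 1) dvd (k' * v) * 3 ^ (h + 1)"
    by (simp add: cong_altdef_nat algebra_simps)
  then have "3 dvd k' * v"
    by simp
  then have "3 dvd k'"
    using v(2) prime_dvd_mult_iff[of 3 k' v] by simp
  then show ?case
    using k by (metis mult_dvd_mono power_Suc2 dvd_refl)
qed simp

lemma prime_factors_eq_singletonD:
  fixes n p :: nat
  assumes "prime_factors n = {p}"
  shows "n = p ^ multiplicity p n"
proof -
  have "n \<noteq> 0"
    using assms by (intro notI) simp
  then show ?thesis
    using prime_factorization_nat[of n] assms by simp
qed

lemma prime_factors_ne_seven_if_cong_one:
  fixes N h :: nat
  assumes "[N = 1] (mod 3 ^ (h + 1))" "N \<le> 3 ^ (2 * h + 2)" "h \<ge> 2"
  shows "prime_factors N \<noteq> {7}"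
proof
  assume "prime_factors N = {7}"
  moreover define k where "k = multiplicity 7 N"
  ultimately have N: "N = 7 ^ k"
    using prime_factors_eq_singletonD by blast
  have "k \<noteq> 0"
    using N \<open>prime_factors N = {7}\<close> by (intro notI) simp
  have "3 ^ h dvd k"
    using three_pow_dvd_exponent[of 2 k h] assms(1) N by simp
  moreover have "2 * h + 2 \<le> 3 ^ h"
    using assms(3) by (induction h rule: dec_induct) auto
  ultimately have "2 * h + 2 \<le> k"
    using \<open>k \<noteq> 0\<close> dvd_imp_le[of "3 ^ h" k] by linarith
  have "N \<le> 3 ^ (2 * h + 2)"
    by (fact assms(2))
  also have "\<dots> < 7 ^ (2 * h + 2)"
    by (intro power_strict_mono) auto
  also have "\<dots> \<le> N"
    unfolding N using \<open>2 * h + 2 \<le> k\<close> by (intro power_increasing) auto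
  finally show False
    by simp
qed

section \<open>Prime divisors of the orders of the Ree groups\<close>

lemma coprime_six_iff:
  fixes n :: nat
  shows "coprime n 6 \<longleftrightarrow> odd n \<and> \<not> 3 dvd n"
proof -
  have "coprime n 6 \<longleftrightarrow> coprime n 2 \<and> coprime n 3"
    using coprime_mult_right_iff[of n 2 3] by simp
  also have "coprime n 3 \<longleftrightarrow> \<not> 3 dvd n"
    using prime_imp_coprime[of 3 n] by (auto simp: coprime_commute)
  finally show ?thesis
    by simp
qed

lemma prime_coprime_six_iff:
  fixes p :: nat
  assumes "prime p"
  shows "coprime p 6 \<longleftrightarrow> 5 \<le> p"
proof
  assume "coprime p 6"
  then have "p \<noteq> 2" "p \<noteq> 3" "p \<noteq> 4" "2 \<le> p"
    using assms by (auto simp: coprime_six_iff prime_ge_2_nat)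
  then show "5 \<le> p"
    by linarith
next
  assume "5 \<le> p"
  then show "coprime p 6"
    using assms prime_odd_nat[of p] primes_dvd_imp_eq[of 3 p] by (auto simp: coprime_six_iff)
qed

lemma ree_order_pow3: "ree_order (3 ^ n) = 3 ^ (3 * n) * (3 ^ n - 1) * (3 ^ (3 * n) + 1)"
  by (simp add: ree_order_def power_mult mult.commute[of 3 n])

lemma ree_order_pow3_ne_0: "0 < n \<Longrightarrow> ree_order (3 ^ n) \<noteq> 0"
  using one_less_power[of "3::nat" n] by (simp add: ree_order_pow3)

lemma pow3_minus_one_dvd_ree_order: "(3::nat) ^ n - 1 dvd ree_order (3 ^ n)"
  unfolding ree_order_pow3 by simp

lemma prime_dvd_ree_order_pow3_iff:
  assumes "prime r" "r \<noteq> 3"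
  shows "r dvd ree_order (3 ^ n) \<longleftrightarrow> r dvd 3 ^ n - 1 \<or> r dvd 3 ^ (3 * n) + 1"
proof -
  have "\<not> r dvd 3"
    using assms primes_dvd_imp_eq[of r 3] by auto
  then have "\<not> r dvd 3 ^ (3 * n)"
    using prime_dvd_power[OF assms(1)] by blast
  then show ?thesis
    unfolding ree_order_pow3 by (simp only: prime_dvd_mult_iff[OF assms(1)] disj_assoc) simp
qed

lemma prime_dvd_ree_order_pow3D:
  assumes "prime r" "r \<noteq> 3" "r dvd ree_order (3 ^ n)"
  shows "r dvd 3 ^ (6 * n) - 1"
proof -
  have "(3::nat) ^ n - 1 dvd 3 ^ (3 * n) - 1"
    by (rule power_minus_one_dvd) simp
  moreover have "(3::nat) ^ (3 * n) - 1 dvd 3 ^ (6 * n) - 1"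
    by (rule power_minus_one_dvd) simp
  moreover have "(3::nat) ^ (3 * n) + 1 dvd 3 ^ (6 * n) - 1"
  proof -
    have "(3::nat) ^ (6 * n) - 1 = (3 ^ (3 * n) + 1) * (3 ^ (3 * n) - 1)"
      by (simp add: algebra_simps flip: power_add)
    then show ?thesis
      by (metis dvd_triv_left)
  qed
  moreover have "r dvd 3 ^ n - 1 \<or> r dvd 3 ^ (3 * n) + 1"
    using assms prime_dvd_ree_order_pow3_iff by blast
  ultimately show ?thesis
    by (meson dvd_trans)
qed

lemma prime_dvd_three_pow_six_minus_one:
  assumes "prime r" "r dvd (3::nat) ^ 6 - 1"
  shows "r \<in> {2, 7, 13}"
proof -
  have "(3::nat) ^ 6 - 1 = 2 ^ 3 * 7 * 13"
    by simp
  then have "r dvd 2 ^ 3 \<or> r dvd 7 \<or> r dvd 13"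
    using assms by (simp only: prime_dvd_mult_iff[OF assms(1)] disj_assoc)
  then have "r dvd 2 \<or> r dvd 7 \<or> r dvd 13"
    using prime_dvd_power[OF assms(1)] by blast
  moreover have "prime (2::nat)" "prime (7::nat)" "prime (13::nat)"
    by simp_all
  ultimately show ?thesis
    using assms(1) primes_dvd_imp_eq by blast
qed

lemma seven_dvd_pow3_cube_plus_one: "odd n \<Longrightarrow> 7 dvd (3::nat) ^ (3 * n) + 1"
  using dvd_power_plus_one[of n 27] by (simp add: power_mult dvd_trans[of 7 28])

lemma seven_dvd_ree_order: "odd n \<Longrightarrow> 7 dvd ree_order (3 ^ n)"
  using prime_dvd_ree_order_pow3_iff[of 7 n] seven_dvd_pow3_cube_plus_one[of n] by simp

lemma two_three_seven_in_prime_factors_ree_order: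
  assumes "odd n"
  shows "{2, 3, 7} \<subseteq> prime_factors (ree_order (3 ^ n))"
proof -
  have "n > 0"
    using assms by (intro odd_pos)
  have "2 dvd ree_order (3 ^ n)"
    by (simp add: ree_order_pow3)
  moreover have "3 dvd ree_order (3 ^ n)"
    using \<open>n > 0\<close> by (simp add: ree_order_pow3)
  moreover have "prime (7::nat)"
    by simp
  ultimately show ?thesis
    using seven_dvd_ree_order[OF assms] ree_order_pow3_ne_0[OF \<open>n > 0\<close>]
    by (simp add: in_prime_factors_iff)
qed

(* 3 has multiplicative order 3 modulo 13, 4 modulo 5 and 18 modulo 19. *)
lemma thirteen_not_dvd_ree_order:
  assumes "\<not> 3 dvd n"
  shows "\<not> 13 dvd ree_order (3 ^ n)"
proof
  assume "13 dvd ree_order (3 ^ n)"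
  then consider "13 dvd (3::nat) ^ n - 1" | "13 dvd (3::nat) ^ (3 * n) + 1"
    using prime_dvd_ree_order_pow3_iff[of 13 n] by auto
  then show False
  proof cases
    case 1
    moreover have "gcd n 3 = 1"
      using assms prime_imp_coprime[of 3 n] by (simp add: coprime_commute)
    ultimately have "13 dvd (3::nat) ^ 1 - 1"
      using dvd_power_minus_one_gcd[of 3 13 n 3] by simp
    then show False
      by simp
  next
    case 2
    moreover have "13 dvd (3::nat) ^ (3 * n) - 1"
      using power_minus_one_dvd[of 3 "3 * n" 3] by (simp add: dvd_trans[of 13 26])
    ultimately have "13 dvd ((3::nat) ^ (3 * n) + 1) - (3 ^ (3 * n) - 1)"
      by (rule dvd_diff_nat)
    then show False
      by simp
  qed
qed

lemma five_not_dvd_ree_order: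
  assumes "odd n"
  shows "\<not> 5 dvd ree_order (3 ^ n)"
proof
  assume "5 dvd ree_order (3 ^ n)"
  then have "5 dvd (3::nat) ^ (6 * n) - 1"
    using prime_dvd_ree_order_pow3D[of 5 n] by simp
  moreover have "gcd (6 * n) 4 = 2"
    using assms gcd_mult_distrib_nat[of 2 "3 * n" 2] by simp
  ultimately have "5 dvd (3::nat) ^ 2 - 1"
    using dvd_power_minus_one_gcd[of 3 5 "6 * n" 4] by simp
  then show False
    by simp
qed

lemma nineteen_not_dvd_ree_order:
  assumes "\<not> 3 dvd n"
  shows "\<not> 19 dvd ree_order (3 ^ n)"
proof
  assume "19 dvd ree_order (3 ^ n)"
  then have "19 dvd (3::nat) ^ (6 * n) - 1"
    using prime_dvd_ree_order_pow3D[of 19 n] by simp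
  moreover have "gcd n 3 = 1"
    using assms prime_imp_coprime[of 3 n] by (simp add: coprime_commute)
  then have "gcd (6 * n) 18 = 6"
    using gcd_mult_distrib_nat[of 6 n 3] by simp
  ultimately have "19 dvd (3::nat) ^ 6 - 1"
    using dvd_power_minus_one_gcd[of 3 19 "6 * n" 18] by simp
  then show False
    by simp
qed

lemma nineteen_dvd_ree_order:
  assumes "odd m" "3 dvd m"
  shows "19 dvd ree_order (3 ^ m)"
proof -
  obtain t where m: "m = 3 * t"
    using assms(2) by blast
  then have "3 ^ 9 + 1 dvd ((3::nat) ^ 9) ^ t + 1"
    using assms(1) by (intro dvd_power_plus_one) simp
  moreover have "((3::nat) ^ 9) ^ t = 3 ^ (3 * m)"
    unfolding m power_mult[symmetric] by simp
  moreover have "19 dvd (3::nat) ^ 9 + 1"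
    by simp
  ultimately have "19 dvd (3::nat) ^ (3 * m) + 1"
    by (metis dvd_trans)
  then show ?thesis
    using prime_dvd_ree_order_pow3_iff[of 19 m] by simp
qed

lemma prime_dvd_ree_order_coprime:
  assumes "prime r" "r \<noteq> 3" "\<not> 3 dvd n" "r dvd ree_order (3 ^ n)"
    and "r dvd 3 ^ c - 1" "coprime n c"
  shows "r = 2 \<or> r = 7"
proof -
  have "r dvd 3 ^ gcd (6 * n) c - 1"
    using assms prime_dvd_ree_order_pow3D dvd_power_minus_one_gcd[of 3 r "6 * n" c] by simp
  moreover have "gcd (6 * n) c dvd 6"
    using assms(6) by (simp add: gcd_mult_left_right_cancel coprime_commute)
  then have "3 ^ gcd (6 * n) c - 1 dvd (3::nat) ^ 6 - 1"
    by (rule power_minus_one_dvd)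
  ultimately have "r dvd 3 ^ 6 - 1"
    by (rule dvd_trans)
  then show ?thesis
    using prime_dvd_three_pow_six_minus_one assms(1,3,4) thirteen_not_dvd_ree_order by auto
qed

lemma prime_factors_ree_order_inter:
  assumes "odd n" "odd n'" "\<not> 3 dvd n" "coprime n n'"
  shows "prime_factors (ree_order (3 ^ n)) \<inter> prime_factors (ree_order (3 ^ n')) = {2, 3, 7}"
proof
  show "{2, 3, 7} \<subseteq> prime_factors (ree_order (3 ^ n)) \<inter> prime_factors (ree_order (3 ^ n'))"
    using two_three_seven_in_prime_factors_ree_order assms(1,2) by blast
  have coprime: "coprime n (6 * n')"
    using assms by (simp add: coprime_six_iff)
  show "prime_factors (ree_order (3 ^ n)) \<inter> prime_factors (ree_order (3 ^ n')) \<subseteq> {2, 3, 7}"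
  proof
    fix r
    assume "r \<in> prime_factors (ree_order (3 ^ n)) \<inter> prime_factors (ree_order (3 ^ n'))"
    then have r: "prime r" "r dvd ree_order (3 ^ n)" "r dvd ree_order (3 ^ n')"
      by (auto simp: in_prime_factors_iff)
    show "r \<in> {2, 3, 7}"
    proof (cases "r = 3")
      case False
      then have "r dvd 3 ^ (6 * n') - 1"
        using prime_dvd_ree_order_pow3D r(1,3) by blast
      then have "r = 2 \<or> r = 7"
        using prime_dvd_ree_order_coprime[OF r(1) False assms(3) r(2) _ coprime] by blast
      then show ?thesis
        by blast
    qed simp
  qed
qed

lemma prime_not_dvd_ree_order:
  assumes "prime p" "p \<notin> {2, 3, 7}" "\<not> 3 dvd n" "coprime n (p - 1)"
  shows "\<not> p dvd ree_order (3 ^ n)"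
proof
  assume "p dvd ree_order (3 ^ n)"
  moreover have "\<not> p dvd 3"
    using assms(1,2) primes_dvd_imp_eq[of p 3] by auto
  then have "[3 ^ (p - 1) = 1] (mod p)"
    using assms(1) by (rule fermat_theorem[rotated])
  then have "p dvd 3 ^ (p - 1) - 1"
    by (simp add: cong_altdef_nat Suc_leI)
  ultimately have "p = 2 \<or> p = 7"
    using assms(1-4) prime_dvd_ree_order_coprime by blast
  then show False
    using assms(2) by blast
qed

section \<open>Prime factors of q +- 1 and q +- sqrt (3 q) + 1\<close>

lemma exists_odd_prime_dvd:
  fixes c :: nat
  assumes "odd c" "1 < c"
  shows "\<exists>r. prime r \<and> r \<noteq> 2 \<and> r dvd c"
proof -
  obtain r where "prime r" "r dvd c"
    using assms(2) prime_factor_nat[of c] by auto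
  moreover from this have "r \<noteq> 2"
    using assms(1) by auto
  ultimately show ?thesis
    by blast
qed

lemma pow3_mod_8:
  assumes "odd n"
  shows "(3::nat) ^ n mod 8 = 3"
proof -
  obtain k where n: "n = 2 * k + 1"
    using assms by (auto elim: oddE)
  have "[3 * 9 ^ k = 3 * 1 ^ k] (mod (8::nat))"
    by (intro cong_mult cong_pow) (auto simp: cong_def)
  moreover have "(3::nat) ^ n = 3 * 9 ^ k"
    by (simp add: n power_add power_mult)
  ultimately show ?thesis
    by (simp add: cong_def)
qed

lemma exists_odd_prime_dvd_pow3_plus_minus_one:
  assumes "odd n" "3 \<le> n"
  shows "\<exists>r. prime r \<and> r \<noteq> 2 \<and> r dvd (3::nat) ^ n + 1"
    and "\<exists>r. prime r \<and> r \<noteq> 2 \<and> r dvd (3::nat) ^ n - 1"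
proof -
  define c where "c = (3::nat) ^ n div 8"
  have "(3::nat) ^ 3 \<le> 3 ^ n"
    using assms(2) by (rule power_increasing) simp
  moreover have q: "(3::nat) ^ n = 8 * c + 3"
    using pow3_mod_8[OF assms(1)] div_mult_mod_eq[of "(3::nat) ^ n" 8] unfolding c_def by linarith
  ultimately have "c \<ge> 3"
    by simp
  have plus: "(3::nat) ^ n + 1 = (2 * c + 1) * 4" and minus: "(3::nat) ^ n - 1 = (4 * c + 1) * 2"
    using q by simp_all
  obtain r where "prime r" "r \<noteq> 2" "r dvd 2 * c + 1"
    using exists_odd_prime_dvd[of "2 * c + 1"] \<open>c \<ge> 3\<close> by auto
  then show "\<exists>r. prime r \<and> r \<noteq> 2 \<and> r dvd (3::nat) ^ n + 1"
    unfolding plus by (blast intro: dvd_mult2)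
  obtain r' where "prime r'" "r' \<noteq> 2" "r' dvd 4 * c + 1"
    using exists_odd_prime_dvd[of "4 * c + 1"] \<open>c \<ge> 3\<close> by auto
  then show "\<exists>r. prime r \<and> r \<noteq> 2 \<and> r dvd (3::nat) ^ n - 1"
    unfolding minus by (blast intro: dvd_mult2)
qed

lemma prime_factors_pow3_plus_minus_one_ne_two:
  assumes "odd n" "3 \<le> n"
  shows "prime_factors ((3::nat) ^ n + 1) \<noteq> {2}" "prime_factors ((3::nat) ^ n - 1) \<noteq> {2}"
proof -
  obtain r where "prime r" "r \<noteq> 2" "r dvd (3::nat) ^ n + 1"
    using exists_odd_prime_dvd_pow3_plus_minus_one(1)[OF assms] by blast
  then have "r \<in> prime_factors ((3::nat) ^ n + 1)" "r \<noteq> 2"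
    by (simp_all add: in_prime_factors_iff)
  then show "prime_factors ((3::nat) ^ n + 1) \<noteq> {2}"
    by blast
  have "(3::nat) ^ n - 1 \<noteq> 0"
    using assms(2) one_less_power[of "3::nat" n] by simp
  moreover obtain r' where "prime r'" "r' \<noteq> 2" "r' dvd (3::nat) ^ n - 1"
    using exists_odd_prime_dvd_pow3_plus_minus_one(2)[OF assms] by blast
  ultimately have "r' \<in> prime_factors ((3::nat) ^ n - 1)" "r' \<noteq> 2"
    by (simp_all add: in_prime_factors_iff)
  then show "prime_factors ((3::nat) ^ n - 1) \<noteq> {2}"
    by blast
qed

lemma seven_not_dvd_pow3_plus_one:
  assumes "\<not> 3 dvd p"
  shows "\<not> 7 dvd (3::nat) ^ p + 1"
proof
  assume "7 dvd (3::nat) ^ p + 1"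
  moreover have "(3::nat) ^ (2 * p) - 1 = (3 ^ p + 1) * (3 ^ p - 1)"
    unfolding mult_2 power_add by (simp add: algebra_simps)
  ultimately have "7 dvd (3::nat) ^ (2 * p) - 1"
    by (metis dvd_mult2)
  moreover have "gcd p 3 = 1"
    using assms prime_imp_coprime[of 3 p] by (simp add: coprime_commute)
  then have "gcd (2 * p) 6 = 2"
    using gcd_mult_distrib_nat[of 2 p 3] by simp
  ultimately have "7 dvd (3::nat) ^ 2 - 1"
    using dvd_power_minus_one_gcd[of 3 7 "2 * p" 6] by simp
  then show False
    by simp
qed

lemma cube_plus_one_factorization:
  fixes q s :: nat
  assumes "s * s = 3 * q" "s \<le> q"
  shows "(q - s + 1) * (q + s + 1) * (q + 1) = q ^ 3 + 1"
proof -
  have "int ((q - s + 1) * (q + s + 1) * (q + 1)) = (int q - int s + 1) * (int q + int s + 1) * (int q + 1)"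
    by (simp only: of_nat_mult of_nat_add of_nat_diff[OF assms(2)] of_nat_1)
  also have "\<dots> = int q ^ 3 + 1 + (3 * int q - int s * int s) * (int q + 1)"
    by (simp only: algebra_simps power3_eq_cube)
  also have "int s * int s = 3 * int q"
    using arg_cong[OF assms(1), of int] by simp
  finally have "int ((q - s + 1) * (q + s + 1) * (q + 1)) = int (q ^ 3 + 1)"
    by simp
  then show ?thesis
    by (simp only: of_nat_eq_iff)
qed

lemma seven_dvd_pow3_sqrt_factor:
  assumes "odd p" "\<not> 3 dvd p"
  shows "7 dvd (3::nat) ^ p - 3 ^ ((p + 1) div 2) + 1 \<or> 7 dvd (3::nat) ^ p + 3 ^ ((p + 1) div 2) + 1"
proof -
  obtain k where p: "p = 2 * k + 1"
    using assms(1) by (auto elim: oddE)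
  define q s where "q = (3::nat) ^ p" and "s = (3::nat) ^ ((p + 1) div 2)"
  have "s = 3 ^ (k + 1)"
    by (simp add: s_def p)
  then have "s * s = 3 * q"
    by (simp add: q_def p flip: power_add power_Suc)
  moreover have "s \<le> q"
    unfolding q_def \<open>s = 3 ^ (k + 1)\<close> p by (intro power_increasing) auto
  ultimately have "(q - s + 1) * (q + s + 1) * (q + 1) = q ^ 3 + 1"
    by (rule cube_plus_one_factorization)
  also have "q ^ 3 + 1 = 3 ^ (3 * p) + 1"
    by (simp add: q_def flip: power_mult)
  finally have "7 dvd (q - s + 1) * (q + s + 1) * (q + 1)"
    using seven_dvd_pow3_cube_plus_one[OF assms(1)] by simp
  moreover have "\<not> 7 dvd q + 1"
    using seven_not_dvd_pow3_plus_one[OF assms(2)] by (simp add: q_def)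
  moreover have "prime (7::nat)"
    by simp
  ultimately have "7 dvd q - s + 1 \<or> 7 dvd q + s + 1"
    by (simp only: prime_dvd_mult_iff) blast
  then show ?thesis
    unfolding q_def s_def .
qed

lemma prime_factors_pow3_sqrt_factor_ne_seven:
  assumes "odd p" "5 \<le> p"
  shows "prime_factors ((3::nat) ^ p + 3 ^ ((p + 1) div 2) + 1) \<noteq> {7}"
    and "prime_factors ((3::nat) ^ p - 3 ^ ((p + 1) div 2) + 1) \<noteq> {7}"
proof -
  obtain h where p: "p = 2 * h + 1"
    using assms(1) by (auto elim: oddE)
  then have "h \<ge> 2"
    using assms(2) by simp
  define q s where "q = (3::nat) ^ p" and "s = (3::nat) ^ ((p + 1) div 2)"
  have s: "s = 3 ^ (h + 1)"
    by (simp add: s_def p)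
  have q: "q = 3 ^ h * s"
    by (simp add: q_def s p flip: power_add)
  have "s \<le> q"
    unfolding q by simp
  moreover have "1 \<le> q"
    by (simp add: q_def)
  moreover have "(3::nat) ^ (2 * h + 2) = 3 * q"
    by (simp add: q_def p)
  ultimately have bound: "q + s + 1 \<le> 3 ^ (2 * h + 2)"
    by linarith
  have "s dvd q + s" "s dvd q - s"
    using q by simp_all
  then have plus: "[q + s + 1 = 1] (mod 3 ^ (h + 1))" and minus: "[q - s + 1 = 1] (mod 3 ^ (h + 1))"
    by (simp_all add: cong_altdef_nat s)
  have "prime_factors (q + s + 1) \<noteq> {7}"
    using plus bound \<open>h \<ge> 2\<close> by (rule prime_factors_ne_seven_if_cong_one)
  moreover have "prime_factors (q - s + 1) \<noteq> {7}"
    using minus _ \<open>h \<ge> 2\<close> by (rule prime_factors_ne_seven_if_cong_one) (use bound in linarith)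
  ultimately
  show "prime_factors ((3::nat) ^ p + 3 ^ ((p + 1) div 2) + 1) \<noteq> {7}"
    and "prime_factors ((3::nat) ^ p - 3 ^ ((p + 1) div 2) + 1) \<noteq> {7}"
    unfolding q_def s_def .
qed

section \<open>Primes dividing the order of only one Ree group\<close>

lemma exists_prime_dvd_pow3_minus_one_prime:
  fixes m :: nat
  assumes "prime m" "coprime m 6"
  shows "\<exists>r. prime r \<and> r dvd (3::nat) ^ m - 1 \<and> (\<forall>p. prime p \<longrightarrow> p \<noteq> m \<longrightarrow> \<not> r dvd 3 ^ (6 * p) - 1)"
proof -
  have "odd m" "5 \<le> m"
    using assms prime_coprime_six_iff by (auto simp: coprime_six_iff)
  then obtain r where r: "prime r" "r \<noteq> 2" "r dvd (3::nat) ^ m - 1"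
    using exists_odd_prime_dvd_pow3_plus_minus_one(2)[of m] by auto
  have "\<not> r dvd 3 ^ (6 * p) - 1" if "prime p" "p \<noteq> m" for p
  proof
    assume "r dvd 3 ^ (6 * p) - 1"
    moreover have "coprime m p"
      using assms(1) that primes_coprime by blast
    then have "gcd m (6 * p) = 1"
      using assms(2) by simp
    ultimately have "r dvd 3 ^ 1 - 1"
      using r(3) dvd_power_minus_one_gcd[of 3 r m "6 * p"] by simp
    then show False
      using r(1,2) primes_dvd_imp_eq[OF r(1) two_is_prime_nat] by simp
  qed
  then show ?thesis
    using r by blast
qed

lemma exists_prime_dvd_pow3_minus_one_composite:
  fixes m :: nat
  assumes "coprime m 6" "\<not> prime m" "1 < m"
  shows "\<exists>r. prime r \<and> r dvd (3::nat) ^ m - 1 \<and> (\<forall>p. prime p \<longrightarrow> \<not> r dvd 3 ^ (6 * p) - 1)"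
proof -
  obtain p1 where p1: "prime p1" "p1 dvd m"
    using prime_factor_nat[of m] assms(3) by auto
  then obtain t where t: "m = p1 * t"
    by blast
  then have "t \<noteq> 1"
    using p1(1) assms(2) by auto
  then obtain p2 where p2: "prime p2" "p2 dvd t"
    using prime_factor_nat by blast
  have "p1 * p2 dvd m"
    using t p2(2) by (simp add: mult_dvd_mono)
  then have cop: "coprime (p1 * p2) 6"
    using assms(1) coprime_imp_coprime dvd_trans by blast
  then have "5 \<le> p1" "5 \<le> p2"
    using p1(1) p2(1) prime_coprime_six_iff by auto
  then obtain r where r: "prime r" "r dvd (3::nat) ^ (p1 * p2) - 1"
    "\<not> r dvd 3 ^ p1 - 1" "\<not> r dvd 3 ^ p2 - 1"
    using exists_new_prime_dvd_power_minus_one[of 3 p1 p2] p1(1) p2(1) by auto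
  have "\<not> r dvd 3 ^ (6 * p) - 1" if p: "prime p" for p
  proof
    assume "r dvd 3 ^ (6 * p) - 1"
    define g where "g = gcd (p1 * p2) (6 * p)"
    have "r dvd 3 ^ g - 1"
      unfolding g_def using r(2) \<open>r dvd 3 ^ (6 * p) - 1\<close> by (rule dvd_power_minus_one_gcd[rotated]) simp
    have "coprime g 6"
      using cop unfolding g_def by (rule coprime_imp_coprime) simp
    then have "g dvd p"
      using coprime_dvd_mult_right_iff[of g 6 p] unfolding g_def by simp
    then have "g = 1 \<or> g = p"
      using p by (simp add: prime_nat_iff)
    moreover have "g dvd p1 * p2"
      by (simp add: g_def)
    ultimately have "g dvd p1 \<or> g dvd p2"
      using p p1(1) p2(1) by (auto simp: prime_dvd_mult_iff)
    then show False
      using r(3,4) \<open>r dvd 3 ^ g - 1\<close> power_minus_one_dvd dvd_trans by metis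
  qed
  then show ?thesis
    using r(1,2) \<open>p1 * p2 dvd m\<close> power_minus_one_dvd dvd_trans by metis
qed

lemma exists_prime_dvd_ree_order_only:
  fixes m :: nat
  assumes "odd m" "3 < m"
  shows "\<exists>r. prime r \<and> r \<noteq> 3 \<and> r dvd ree_order (3 ^ m) \<and>
    (\<forall>p. prime p \<longrightarrow> 5 \<le> p \<longrightarrow> p \<noteq> m \<longrightarrow> \<not> r dvd ree_order (3 ^ p))"
proof (cases "3 dvd m")
  case True
  have "\<not> 19 dvd ree_order (3 ^ p)" if "prime p" "5 \<le> p" for p
    using that primes_dvd_imp_eq[of 3 p] by (intro nineteen_not_dvd_ree_order) auto
  then show ?thesis
    using nineteen_dvd_ree_order[OF assms(1) True] by (intro exI[of _ 19]) simp
next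
  case False
  then have "coprime m 6"
    using assms(1) by (simp add: coprime_six_iff)
  have "\<exists>r. prime r \<and> r dvd (3::nat) ^ m - 1 \<and> (\<forall>p. prime p \<longrightarrow> p \<noteq> m \<longrightarrow> \<not> r dvd 3 ^ (6 * p) - 1)"
  proof (cases "prime m")
    case True
    then show ?thesis
      using exists_prime_dvd_pow3_minus_one_prime \<open>coprime m 6\<close> by blast
  next
    case False
    moreover have "1 < m"
      using assms(2) by simp
    ultimately show ?thesis
      using exists_prime_dvd_pow3_minus_one_composite[OF \<open>coprime m 6\<close>] by blast
  qed
  then obtain r where r: "prime r" "r dvd (3::nat) ^ m - 1"
    and new: "\<And>p. prime p \<Longrightarrow> p \<noteq> m \<Longrightarrow> \<not> r dvd 3 ^ (6 * p) - 1"
    by blast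
  have "r \<noteq> 3"
    using r(2) not_dvd_power_minus_one[of 3 m] assms(2) by auto
  moreover have "r dvd ree_order (3 ^ m)"
    using r(2) pow3_minus_one_dvd_ree_order by (rule dvd_trans)
  moreover have "\<not> r dvd ree_order (3 ^ p)" if "prime p" "p \<noteq> m" for p
  proof
    assume "r dvd ree_order (3 ^ p)"
    then have "r dvd 3 ^ (6 * p) - 1"
      using r(1) \<open>r \<noteq> 3\<close> by (intro prime_dvd_ree_order_pow3D)
    then show False
      using new that by blast
  qed
  ultimately show ?thesis
    using r(1) by blast
qed

section \<open>The sequence pp\<close>

lemma exists_prime_gt_not_dvd:
  fixes f :: "'a \<Rightarrow> nat"
  assumes "finite S" "\<And>y. y \<in> S \<Longrightarrow> f y \<noteq> 0"
  shows "\<exists>p. prime p \<and> a < p \<and> (\<forall>y\<in>S. \<not> p dvd f y)"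
proof -
  obtain p where p: "prime p" "a + prod f S < p"
    using bigger_prime by blast
  have "\<not> p dvd f y" if "y \<in> S" for y
  proof
    assume "p dvd f y"
    then have "p \<le> f y"
      using assms(2) that by (simp add: dvd_imp_le)
    also have "f y \<le> prod f S"
      using assms that by (intro dvd_imp_le dvd_prodI) auto
    finally show False
      using p(2) by simp
  qed
  then show ?thesis
    using p by auto
qed

lemma length_plist: "length (plist n) = Suc n"
  by (induction n) auto

lemma pp_Suc: "pp (Suc n) = last (plist n)"
proof -
  have "plist n \<noteq> []"
    using length_plist[of n] by auto
  then show ?thesis
    by (simp add: pp_def last_conv_nth length_plist)
qed

lemma pp_1: "pp 1 = 5"
  by (simp add: pp_def)

lemma set_plist: "set (plist n) = pp ` {1..Suc n}"
proof (induction n)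
  case 0
  show ?case
    by (simp add: pp_def)
next
  case (Suc n)
  have "{1..Suc (Suc n)} = insert (Suc (Suc n)) {1..Suc n}"
    by auto
  moreover have "last (plist (Suc n)) = pp (Suc (Suc n))"
    by (simp only: pp_Suc)
  ultimately show ?case
    using Suc by simp
qed

lemma pp_Suc_Suc:
  "pp (Suc (Suc n)) =
    (LEAST x. prime x \<and> pp (Suc n) < x \<and> (\<forall>j\<in>{1..Suc n}. \<not> x dvd ree_order (qq j)))"
  by (simp add: pp_Suc [of "Suc n"] pp_Suc [of n, symmetric] set_plist qq_def)

lemma pp_Suc_Suc_spec_if_pos:
  assumes "\<And>j. j \<in> {1..Suc n} \<Longrightarrow> 0 < pp j"
  shows "prime (pp (Suc (Suc n))) \<and> pp (Suc n) < pp (Suc (Suc n)) \<and>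
    (\<forall>j\<in>{1..Suc n}. \<not> pp (Suc (Suc n)) dvd ree_order (qq j))"
proof -
  have "\<exists>x. prime x \<and> pp (Suc n) < x \<and> (\<forall>j\<in>{1..Suc n}. \<not> x dvd ree_order (qq j))"
    using assms by (intro exists_prime_gt_not_dvd) (auto simp: qq_def ree_order_pow3_ne_0)
  then show ?thesis
    unfolding pp_Suc_Suc by (rule LeastI_ex)
qed

lemma prime_pp: "1 \<le> i \<Longrightarrow> prime (pp i)"
proof (induction i rule: less_induct)
  case (less i)
  show ?case
  proof (cases "i = 1")
    case False
    then obtain n where "i = Suc (Suc n)"
      using less.prems by (metis One_nat_def Suc_le_D le_Suc_eq)
    moreover have "0 < pp j" if "j \<in> {1..Suc n}" for j
      using less.IH[of j] that \<open>i = Suc (Suc n)\<close> by (simp add: prime_gt_0_nat)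
    ultimately show ?thesis
      using pp_Suc_Suc_spec_if_pos by blast
  qed (simp add: pp_def)
qed

lemma pp_Suc_Suc_spec:
  "pp (Suc n) < pp (Suc (Suc n)) \<and> (\<forall>j\<in>{1..Suc n}. \<not> pp (Suc (Suc n)) dvd ree_order (qq j))"
  using pp_Suc_Suc_spec_if_pos[of n] prime_pp by (auto simp: prime_gt_0_nat)

lemma pp_strict_mono: "strict_mono (\<lambda>n. pp (Suc n))"
  using pp_Suc_Suc_spec by (simp add: strict_mono_Suc_iff)

lemma pp_less: "1 \<le> j \<Longrightarrow> j < i \<Longrightarrow> pp j < pp i"
  using strict_monoD[OF pp_strict_mono, of "j - 1" "i - 1"] by simp

lemma pp_not_dvd_ree_order_earlier:
  assumes "1 \<le> j" "j < i"
  shows "\<not> pp i dvd ree_order (qq j)"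
proof -
  define n where "n = i - 2"
  then have "i = Suc (Suc n)" "j \<in> {1..Suc n}"
    using assms by auto
  then show ?thesis
    using pp_Suc_Suc_spec by blast
qed

lemma pp_ge_5: "1 \<le> i \<Longrightarrow> 5 \<le> pp i"
  using pp_less[of 1 i] pp_1 by (cases "i = 1") auto

lemma pp_ne_7:
  assumes "1 \<le> i"
  shows "pp i \<noteq> 7"
proof
  assume "pp i = 7"
  moreover have "i \<noteq> 1"
    using \<open>pp i = 7\<close> pp_1 by (intro notI) simp
  ultimately have "1 < i"
    using assms by linarith
  moreover have "7 dvd ree_order (qq 1)"
    unfolding qq_def pp_1 using seven_dvd_ree_order[of 5] by simp
  ultimately show False
    using pp_not_dvd_ree_order_earlier[of 1 i] \<open>pp i = 7\<close> by simp
qed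

lemma pp_coprime_six: "1 \<le> i \<Longrightarrow> coprime (pp i) 6"
  using prime_pp pp_ge_5 prime_coprime_six_iff by blast

lemma pp_not_dvd_ree_order:
  assumes "1 \<le> i" "1 \<le> j"
  shows "\<not> pp i dvd ree_order (qq j)"
proof (cases "j < i")
  case True
  then show ?thesis
    using assms(2) by (rule pp_not_dvd_ree_order_earlier[rotated])
next
  case False
  then have "pp i \<le> pp j"
    using pp_less[of i j] assms(1) by (cases "i = j") auto
  moreover have "prime (pp i)" "prime (pp j)" "5 \<le> pp i"
    using assms prime_pp pp_ge_5 by auto
  ultimately have "coprime (pp j) (pp i - 1)"
    by (intro prime_imp_coprime) (auto dest: dvd_imp_le)
  moreover have "\<not> 3 dvd pp j"
    using pp_coprime_six[OF assms(2)] by (simp add: coprime_six_iff)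
  ultimately show ?thesis
    unfolding qq_def using prime_not_dvd_ree_order \<open>prime (pp i)\<close> \<open>5 \<le> pp i\<close> pp_ne_7[OF assms(1)] by auto
qed

lemma mem_pp_if_prime_factors_ree_order_subset:
  assumes "odd m" "3 < m"
    and "prime_factors (ree_order (3 ^ m)) \<subseteq> prime_factors (\<Prod>j=1..k. ree_order (qq j))"
  shows "m \<in> pp ` {1..k}"
proof -
  obtain r where r: "prime r" "r \<noteq> 3" "r dvd ree_order (3 ^ m)"
    and only: "\<And>p. prime p \<Longrightarrow> 5 \<le> p \<Longrightarrow> p \<noteq> m \<Longrightarrow> \<not> r dvd ree_order (3 ^ p)"
    using exists_prime_dvd_ree_order_only[OF assms(1,2)] by blast
  have "r \<in> prime_factors (ree_order (3 ^ m))"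
    using r assms(2) ree_order_pow3_ne_0[of m] by (simp add: in_prime_factors_iff)
  then have "r dvd (\<Prod>j=1..k. ree_order (qq j))"
    using assms(3) by (auto simp: in_prime_factors_iff)
  then obtain j where "j \<in> {1..k}" "r dvd ree_order (3 ^ pp j)"
    using r(1) by (auto simp: prime_dvd_prod_iff qq_def)
  moreover from this have "prime (pp j)" "5 \<le> pp j"
    using prime_pp pp_ge_5 by auto
  ultimately show ?thesis
    using only by blast
qed

theorem lemma2p1:
  fixes i :: nat
  assumes "i \<ge> 1"
  shows "(\<forall>j\<ge>1. j \<noteq> i \<longrightarrow>
            prime_set (ree_order (qq i)) \<inter> prime_set (ree_order (qq j)) = {2, 3, 7})
       \<and> (\<forall>j\<ge>1. pp i \<notin> prime_set (ree_order (qq j)) \<and> 5 \<notin> prime_set (ree_order (qq j)))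
       \<and> prime_set (qq i + 1) \<noteq> {2} \<and> prime_set (qq i - 1) \<noteq> {2}
       \<and> (7 dvd (qq i - sq3q i + 1) \<or> 7 dvd (qq i + sq3q i + 1))
       \<and> prime_set (qq i + sq3q i + 1) \<noteq> {7} \<and> prime_set (qq i - sq3q i + 1) \<noteq> {7}
       \<and> (\<forall>k\<ge>1. \<forall>m::nat. m > 3 \<and> odd m \<and>
            prime_set (ree_order (3 ^ m)) \<subseteq> prime_set (\<Prod>j=1..k. ree_order (qq j))
            \<longrightarrow> m \<in> pp ` {1..k})"
proof -
  have pp_i: "prime (pp i)" "5 \<le> pp i" "odd (pp i)" "\<not> 3 dvd pp i"
    using assms prime_pp pp_ge_5 pp_coprime_six by (auto simp: coprime_six_iff)
  have "prime_set (ree_order (qq i)) \<inter> prime_set (ree_order (qq j)) = {2, 3, 7}"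
    if "j \<ge> 1" "j \<noteq> i" for j
  proof -
    have "pp i \<noteq> pp j"
      using pp_less that assms by (metis nat_neq_iff)
    then show ?thesis
      unfolding qq_def using that pp_i pp_coprime_six[of j] prime_pp[of j]
      by (intro prime_factors_ree_order_inter) (auto simp: primes_coprime coprime_six_iff)
  qed
  moreover have "pp i \<notin> prime_set (ree_order (qq j)) \<and> 5 \<notin> prime_set (ree_order (qq j))"
    if "j \<ge> 1" for j
    using pp_not_dvd_ree_order[OF assms that] five_not_dvd_ree_order[of "pp j"] pp_coprime_six[OF that]
    by (auto simp: in_prime_factors_iff qq_def coprime_six_iff)
  ultimately show ?thesis
    unfolding qq_def sq3q_def
    using prime_factors_pow3_plus_minus_one_ne_two[OF pp_i(3)] pp_i(2)
      seven_dvd_pow3_sqrt_factor[OF pp_i(3,4)] prime_factors_pow3_sqrt_factor_ne_seven[OF pp_i(3,2)]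
      mem_pp_if_prime_factors_ree_order_subset
    by (simp add: qq_def)
qed

end
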